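(* Let $\mathbf{f} = (f_1, \ldots, f_m) : \mathcal{X} \to \mathcal{Y} \subset \mathbb{R}^m$ with $\mathcal{X} \subset \mathbb{R}^n$ be a multi-objective minimization problem whose ideal point $\mathbf{y}^* = (\min_{\mathbf{y} \in \mathcal{Y}^*} y_1, \ldots, \min_{\mathbf{y} \in \mathcal{Y}^*} y_m)$ is the zero vector, where $\mathcal{Y}^*$ is the Pareto front. Let $\mathbf{w} \in \mathbb{R}^m$ have positive entries and let $g_{\mathbf{w}}(\mathbf{x}) = \max_{1 \le j \le m} w_j |f_j(\mathbf{x}) - y^*_j|$ be the weighted Tchebycheff function with reference point the ideal point. Let $\mathbf{x}^1, \ldots, \mathbf{x}^{v(t)} \in \mathcal{X}$ be finitely many sampled points (with $v(t) \ge 1$), let $\mathbf{x}(t) \in \arg\min_{1 \le i \le v(t)} g_{\mathbf{w}}(\mathbf{x}^i)$, and let $$\mathcal{Y}^t_* = \{\mathbf{f}(\mathbf{x}^i) : 1 \le i \le v(t),\ \mathbf{f}(\mathbf{x}^k) \nprec \mathbf{f}(\mathbf{x}^i) \text{ for all } k \ne i\}.$$ Then $I^1_{\epsilon+}(\mathcal{Y}^t_* ) \le \max_j \frac{1}{w_j}\, g_{\mathbf{w}}(\mathbf{x}(t))$.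
   Context: Pareto dominance: $\mathbf{y}^1 \prec \mathbf{y}^2$ iff $y^1_j \le y^2_j$ for all $j$ and $y^1_k < y^2_k$ for some $k$. A vector $\hat{\mathbf{y}} \in \mathcal{Y}$ is Pareto optimal iff no $\mathbf{y} \in \mathcal{Y}$ satisfies $\mathbf{y} \prec \hat{\mathbf{y}}$; the set of Pareto optimal vectors is the Pareto front $\mathcal{Y}^*$. For sets $A, B \subseteq \mathbb{R}^m$, the additive $\epsilon$-indicator is $I_{\epsilon+}(A,B) = \inf\{\epsilon \in \mathbb{R} : \forall \mathbf{y}^2 \in B\ \exists \mathbf{y}^1 \in A \text{ with } y^1_j \le \epsilon + y^2_j \text{ for all } j\}$, and the unary version is $I^1_{\epsilon+}(A) = I_{\epsilon+}(A, \mathcal{Y}^* )$. *)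

theory Defs
  imports "HOL-Analysis.Analysis" "HOL-Library.Extended_Real"
begin

text \<open>Objective vectors in R^m are modelled as real^'m (m = CARD('m)).\<close>

definition pdom :: "real ^ 'm \<Rightarrow> real ^ 'm \<Rightarrow> bool" (infix "\<prec>\<^sub>P" 50) where
  "y1 \<prec>\<^sub>P y2 \<longleftrightarrow> (\<forall>j. y1 $ j \<le> y2 $ j) \<and> (\<exists>k. y1 $ k < y2 $ k)"

definition pareto_front :: "(real ^ 'm) set \<Rightarrow> (real ^ 'm) set" where
  "pareto_front Y = {yh \<in> Y. \<not> (\<exists>y\<in>Y. y \<prec>\<^sub>P yh)}"

definition is_ideal_point :: "(real ^ 'm) set \<Rightarrow> real ^ 'm \<Rightarrow> bool" where
  "is_ideal_point Ys yst \<longleftrightarrow>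
     (\<forall>j. yst $ j \<in> (\<lambda>y. y $ j) ` Ys \<and> (\<forall>y\<in>Ys. yst $ j \<le> y $ j))"

definition eps_ind :: "(real ^ 'm) set \<Rightarrow> (real ^ 'm) set \<Rightarrow> ereal" where
  "eps_ind A B = Inf {ereal e | e. \<forall>y2\<in>B. \<exists>y1\<in>A. \<forall>j. y1 $ j \<le> e + y2 $ j}"

definition eps_ind1 :: "('a \<Rightarrow> real ^ 'm) \<Rightarrow> 'a set \<Rightarrow> (real ^ 'm) set \<Rightarrow> ereal" where
  "eps_ind1 f X A = eps_ind A (pareto_front (f ` X))"

definition tcheby :: "real ^ 'm \<Rightarrow> real ^ 'm \<Rightarrow> ('a \<Rightarrow> real ^ 'm) \<Rightarrow> 'a \<Rightarrow> real" where
  "tcheby w yst f x = (MAX j. w $ j * \<bar>f x $ j - yst $ j\<bar>)"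

end

theory Submission
  imports Defs
begin

text \<open>Every Pareto optimal vector is componentwise nonnegative, since the ideal point is zero.
  By the definition of the Tchebycheff function, y := f(x(t)) satisfies
  y_j \<le> g_w(x(t)) / w_j \<le> e, where e is the claimed bound. Among the samples whose images
  are componentwise below y, one with minimal coordinate sum is non-dominated by all samples,
  so it lies in the approximation set and is within e of every Pareto optimal vector.\<close>

lemma pdom_imp_sum_less:
  assumes "y1 \<prec>\<^sub>P y2"
  shows "(\<Sum>j\<in>UNIV. y1 $ j) < (\<Sum>j\<in>UNIV. y2 $ j)"
  using assms unfolding pdom_def by (intro sum_strict_mono_ex1) auto

lemma pdom_trans_le:
  assumes "y1 \<prec>\<^sub>P y2" and "\<forall>j. y2 $ j \<le> y3 $ j"
  shows "\<forall>j. y1 $ j \<le> y3 $ j"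
  using assms unfolding pdom_def by (meson order_trans)

lemma exists_nondominated_below:
  fixes F :: "'i \<Rightarrow> real ^ 'm"
  assumes "finite I" and "a \<in> I"
  obtains i where "i \<in> I" and "\<forall>j. F i $ j \<le> F a $ j" and "\<forall>k\<in>I. \<not> F k \<prec>\<^sub>P F i"
proof -
  define S where "S = {i \<in> I. \<forall>j. F i $ j \<le> F a $ j}"
  define h where "h = (\<lambda>i. \<Sum>j\<in>UNIV. F i $ j)"
  have "finite S" "a \<in> S"
    using assms unfolding S_def by auto
  then obtain i where iS: "i \<in> S" and hmin: "\<forall>k\<in>S. h i \<le> h k"
    using ex_min_if_finite[of "h ` S"] by (fastforce simp: not_less)
  have "\<not> F k \<prec>\<^sub>P F i" if "k \<in> I" for k
  proof
    assume dom: "F k \<prec>\<^sub>P F i"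
    then have "k \<in> S"
      using iS \<open>k \<in> I\<close> pdom_trans_le unfolding S_def by blast
    moreover have "h k < h i"
      unfolding h_def using dom by (rule pdom_imp_sum_less)
    ultimately show False
      using hmin by fastforce
  qed
  then show thesis
    using iS that unfolding S_def by blast
qed

lemma eps_ind_le_if_shifted_cover:
  assumes "\<forall>y2\<in>B. \<exists>y1\<in>A. \<forall>j. y1 $ j \<le> e + y2 $ j"
  shows "eps_ind A B \<le> ereal e"
  unfolding eps_ind_def using assms by (intro Inf_lower) blast

lemma tcheby_component_bound:
  assumes "w $ j > 0"
  shows "\<bar>f x $ j - yst $ j\<bar> \<le> tcheby w yst f x / w $ j"
proof -
  have "w $ j * \<bar>f x $ j - yst $ j\<bar> \<le> tcheby w yst f x"
    unfolding tcheby_def by (rule Max_ge) auto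
  then show ?thesis
    using assms by (simp add: field_simps mult.commute)
qed

lemma ideal_point_le:
  assumes "is_ideal_point Ys yst" and "y \<in> Ys"
  shows "yst $ j \<le> y $ j"
  using assms unfolding is_ideal_point_def by blast

theorem theorem3:
  fixes f :: "real ^ 'n \<Rightarrow> real ^ 'm"
    and X :: "(real ^ 'n) set"
    and w :: "real ^ 'm"
    and xs :: "nat \<Rightarrow> real ^ 'n"
    and v :: nat and it :: nat
  assumes ideal: "is_ideal_point (pareto_front (f ` X)) 0"
    and wpos: "\<forall>j. w $ j > 0"
    and v1: "v \<ge> 1"
    and samples: "\<forall>i\<in>{1..v}. xs i \<in> X"
    and it_mem: "it \<in> {1..v}"
    and it_min: "\<forall>i\<in>{1..v}. tcheby w 0 f (xs it) \<le> tcheby w 0 f (xs i)"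
  shows "eps_ind1 f X
           {f (xs i) | i. i \<in> {1..v} \<and> (\<forall>k\<in>{1..v}. k \<noteq> i \<longrightarrow> \<not> (f (xs k) \<prec>\<^sub>P f (xs i)))}
         \<le> ereal (MAX j. (1 / w $ j) * tcheby w 0 f (xs it))"
proof -
  define e where "e = (MAX j. (1 / w $ j) * tcheby w 0 f (xs it))"
  obtain i where i: "i \<in> {1..v}" and below: "\<forall>j. f (xs i) $ j \<le> f (xs it) $ j"
    and nondom: "\<forall>k\<in>{1..v}. \<not> f (xs k) \<prec>\<^sub>P f (xs i)"
    using exists_nondominated_below[of "{1..v}" it "\<lambda>i. f (xs i)"] it_mem by auto
  have it_le_e: "f (xs it) $ j \<le> e" for j
  proof -
    have "\<bar>f (xs it) $ j\<bar> \<le> (1 / w $ j) * tcheby w 0 f (xs it)"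
      using tcheby_component_bound[of w j f "xs it" 0] wpos by simp
    also have "\<dots> \<le> e"
      unfolding e_def by (rule Max_ge) auto
    finally show ?thesis by linarith
  qed
  have "\<forall>j. f (xs i) $ j \<le> e + y2 $ j" if "y2 \<in> pareto_front (f ` X)" for y2
    using ideal_point_le[OF ideal that] below it_le_e by (smt (verit) zero_index)
  then show ?thesis
    unfolding eps_ind1_def e_def using i nondom
    by (intro eps_ind_le_if_shifted_cover) blast
qed

end
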